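(* Let $k\ge 4$ be an even integer. If $\Gamma\in M_{0,1,2,\ldots,k-2,k-1}$, then $\Gamma$ has a Fulkerson-cover.
   Context: All graphs are finite. A Fulkerson-cover of a cubic graph is a collection of six perfect matchings such that every edge belongs to exactly two of them. A cubic graph is cyclically 4-edge-connected if at least 4 edges must be removed to disconnect it into two components each containing a circuit. The family $M_{0,1,\ldots,k-1}$ ($k\ge 2$): Let $G_0,G_1,\ldots,G_{k-1}$ be bridgeless, cyclically 4-edge-connected cubic graphs, each having a Fulkerson-cover. In each $G_i$ choose an edge $x_iy_i$, let $x_i^0,x_i^1$ be the two neighbours of $x_i$ other than $y_i$, let $y_i^0,y_i^1$ be the two neighbours of $y_i$ other than $x_i$, and let $H_i=G_i\setminus\{x_i,y_i\}$ (delete the two vertices and their incident edges). The graph $\{G;G_0,\ldots,G_{k-1}\}$ is obtained from the disjoint union of $H_0,\ldots,H_{k-1}$ by adding new vertices $a_j,b_j,c_j$ for $0\le j\le k-1$ and $v_0,\ldots,v_{k-3}$ (none if $k=2$), and the following edges, with indices of $x$ taken modulo $k$: - for each $0\le j\le k-1$: $a_jy_j^0$, $a_jx_{j+1}^0$, $b_jy_j^1$, $b_jx_{j+1}^1$, $a_jc_j$, $b_jc_j$; - the edges of the path $c_1v_0v_1\cdots v_{k-3}c_0$ (for $k=2$ this is the single edge $c_0c_1$); - for each $2\le i\le k-1$: the edge $c_iv_{i-2}$. (Equivalently, it is built recursively: for $k=2$ take the graph above with edge $c_0c_1$; for $i=3,\ldots,k$, add $H_{i-1}$ and $a_{i-1},b_{i-1},c_{i-1}$,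 subdivide the edge at $c_0$ not of the form $a_0c_0,b_0c_0$ by a new vertex $v_{i-3}$, join $c_{i-1}$ to $a_{i-1},b_{i-1},v_{i-3}$, make $a_{i-1}$ adjacent to $x_0^0,y_{i-1}^0$, $b_{i-1}$ adjacent to $x_0^1,y_{i-1}^1$, and replace the edges $a_{i-2}x_0^0$, $b_{i-2}x_0^1$ by $a_{i-2}x_{i-1}^0$, $b_{i-2}x_{i-1}^1$.) $M_{0,1,\ldots,k-1}$ denotes the set of all graphs obtained this way, over all such choices of $G_i$, edges $x_iy_i$ and labelings of neighbours. *)

theory Defs
  imports Main
begin

definition graph :: "'a set \<Rightarrow> 'a set set \<Rightarrow> bool" where
  "graph V E \<longleftrightarrow> finite V \<and> (\<forall>e\<in>E. \<exists>u v. u \<noteq> v \<and> u \<in> V \<and> v \<in> V \<and> e = {u, v})"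

definition degree :: "'a set set \<Rightarrow> 'a \<Rightarrow> nat" where
  "degree E v = card {e \<in> E. v \<in> e}"

definition cubic :: "'a set \<Rightarrow> 'a set set \<Rightarrow> bool" where
  "cubic V E \<longleftrightarrow> graph V E \<and> (\<forall>v\<in>V. degree E v = 3)"

definition perfect_matching :: "'a set \<Rightarrow> 'a set set \<Rightarrow> 'a set set \<Rightarrow> bool" where
  "perfect_matching V E M \<longleftrightarrow> M \<subseteq> E \<and> (\<forall>v\<in>V. \<exists>!e. e \<in> M \<and> v \<in> e)"

definition has_fulkerson_cover :: "'a set \<Rightarrow> 'a set set \<Rightarrow> bool" where
  "has_fulkerson_cover V E \<longleftrightarrow>
     (\<exists>M :: nat \<Rightarrow> 'a set set. (\<forall>i<6. perfect_matching V E (M i)) \<and>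
        (\<forall>e\<in>E. card {i. i < 6 \<and> e \<in> M i} = 2))"

definition connected_in :: "'a set set \<Rightarrow> 'a \<Rightarrow> 'a \<Rightarrow> bool" where
  "connected_in F u v \<longleftrightarrow> (u, v) \<in> {(p, q). {p, q} \<in> F}\<^sup>*"

definition bridgeless :: "'a set \<Rightarrow> 'a set set \<Rightarrow> bool" where
  "bridgeless V E \<longleftrightarrow> (\<forall>u v. {u, v} \<in> E \<longrightarrow> connected_in (E - {{u, v}}) u v)"

definition has_circuit :: "'a set set \<Rightarrow> bool" where
  "has_circuit F \<longleftrightarrow> (\<exists>vs. length vs \<ge> 3 \<and> distinct vs \<and>
      (\<forall>i<length vs. {vs ! i, vs ! ((i + 1) mod length vs)} \<in> F))"

definition induced_edges :: "'a set set \<Rightarrow> 'a set \<Rightarrow> 'a set set" where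
  "induced_edges E S = {e \<in> E. e \<subseteq> S}"

definition cut_edges :: "'a set set \<Rightarrow> 'a set \<Rightarrow> 'a set set" where
  "cut_edges E S = {e \<in> E. e \<inter> S \<noteq> {} \<and> e - S \<noteq> {}}"

definition cyclically_4_edge_connected :: "'a set \<Rightarrow> 'a set set \<Rightarrow> bool" where
  "cyclically_4_edge_connected V E \<longleftrightarrow>
     (\<forall>S \<subseteq> V. has_circuit (induced_edges E S) \<and> has_circuit (induced_edges E (V - S))
        \<longrightarrow> card (cut_edges E S) \<ge> 4)"

datatype 'a mv = Hv nat 'a | A nat | B nat | C nat | Vv nat

definition cpath :: "nat \<Rightarrow> 'a mv list" where
  "cpath k = [C 1] @ map Vv [0..<k - 2] @ [C 0]"

definition constr_vertices ::
  "nat \<Rightarrow> (nat \<Rightarrow> 'a set) \<Rightarrow> (nat \<Rightarrow> 'a) \<Rightarrow> (nat \<Rightarrow> 'a) \<Rightarrow> 'a mv set" where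
  "constr_vertices k V x y =
     {Hv i u | i u. i < k \<and> u \<in> V i - {x i, y i}}
     \<union> {A j | j. j < k} \<union> {B j | j. j < k} \<union> {C j | j. j < k} \<union> {Vv j | j. j + 2 < k}"

definition constr_edges ::
  "nat \<Rightarrow> (nat \<Rightarrow> 'a set set) \<Rightarrow> (nat \<Rightarrow> 'a) \<Rightarrow> (nat \<Rightarrow> 'a) \<Rightarrow>
   (nat \<Rightarrow> 'a) \<Rightarrow> (nat \<Rightarrow> 'a) \<Rightarrow> (nat \<Rightarrow> 'a) \<Rightarrow> (nat \<Rightarrow> 'a) \<Rightarrow> 'a mv set set" where
  "constr_edges k E x y x0 x1 y0 y1 =
     {{Hv i u, Hv i w} | i u w. i < k \<and> {u, w} \<in> E i \<and> x i \<notin> {u, w} \<and> y i \<notin> {u, w}}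
     \<union> (\<Union>j\<in>{..<k}.
          {{A j, Hv j (y0 j)}, {A j, Hv (Suc j mod k) (x0 (Suc j mod k))},
           {B j, Hv j (y1 j)}, {B j, Hv (Suc j mod k) (x1 (Suc j mod k))},
           {A j, C j}, {B j, C j}})
     \<union> {{(cpath k :: 'a mv list) ! i, cpath k ! Suc i} | i. Suc i < length (cpath k :: 'a mv list)}
     \<union> {{C i, Vv (i - 2)} | i. 2 \<le> i \<and> i < k}"

definition admissible_piece ::
  "'a set \<Rightarrow> 'a set set \<Rightarrow> 'a \<Rightarrow> 'a \<Rightarrow> 'a \<Rightarrow> 'a \<Rightarrow> 'a \<Rightarrow> 'a \<Rightarrow> bool" where
  "admissible_piece V E x y x0 x1 y0 y1 \<longleftrightarrow>
     cubic V E \<and> bridgeless V E \<and> cyclically_4_edge_connected V E \<and> has_fulkerson_cover V E \<and>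
     {x, y} \<in> E \<and>
     x0 \<noteq> x1 \<and> {x, x0} \<in> E \<and> {x, x1} \<in> E \<and> x0 \<noteq> y \<and> x1 \<noteq> y \<and>
     y0 \<noteq> y1 \<and> {y, y0} \<in> E \<and> {y, y1} \<in> E \<and> y0 \<noteq> x \<and> y1 \<noteq> x"

text \<open>The family M_{0,1,...,k-1}, realised on the concrete vertex type 'a mv.\<close>
definition M_family :: "nat \<Rightarrow> ('a mv set \<times> 'a mv set set) set" where
  "M_family k = {(constr_vertices k V x y, constr_edges k E x y x0 x1 y0 y1) |
       V E x y x0 x1 y0 y1.
       (\<forall>i<k. admissible_piece (V i) (E i) (x i) (y i) (x0 i) (x1 i) (y0 i) (y1 i))}"

end

(* A Fulkerson-cover of a cubic graph is the same as a labelling of its edges by 2-subsets of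
   six colours such that at every vertex the labels of the three edges partition the colours.
   Take such a labelling of each G_i and permute its colours so that the deleted edge x_i y_i and
   the four edges at x_i and y_i receive prescribed colours.  The edges of the new graph then
   inherit labels from the pieces, a_j c_j and b_j c_j receive the colours missing at a_j and
   b_j, and the path edges receive constant labels; evenness of k lets the alternating labelling
   of the path close up at c_0.  At junction j the order in which the two colours of the third
   edge at c_j are split between y_j y_j^0 and y_j y_j^1 propagates through every piece whose two
   junctions use the same colour pair, and is absorbed by the pieces 0 and 2, whose junctions use
   disjoint pairs. *)

theory Submission
  imports Defs
begin

lemma graph_edgeD:
  assumes "graph V E" "{a, b} \<in> E"
  shows "a \<noteq> b" "a \<in> V" "b \<in> V"
  using assms unfolding graph_def by (auto simp: doubleton_eq_iff)

lemma graph_edge_other_end: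
  assumes "graph V E" "f \<in> E" "u \<in> f"
  obtains w where "f = {u, w}" "w \<noteq> u"
  using assms unfolding graph_def by fastforce

lemma cubic_incident_edges:
  assumes "cubic V E" "v \<in> V" "{e1, e2, e3} \<subseteq> {e \<in> E. v \<in> e}"
    "e1 \<noteq> e2" "e1 \<noteq> e3" "e2 \<noteq> e3"
  shows "{e \<in> E. v \<in> e} = {e1, e2, e3}"
proof -
  have card3: "card {e \<in> E. v \<in> e} = 3"
    using assms(1,2) unfolding cubic_def degree_def by auto
  then have "finite {e \<in> E. v \<in> e}"
    by (metis card.infinite zero_neq_numeral)
  moreover have "card {e1, e2, e3} = 3"
    using assms(4-6) by auto
  ultimately show ?thesis
    using card_subset_eq[OF _ assms(3)] card3 by simp
qed

section \<open>Fulkerson-covers as colourings by pairs of six colours\<close>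

definition colours :: "(nat \<Rightarrow> 'a set set) \<Rightarrow> 'a set \<Rightarrow> nat set" where
  "colours M e = {i. i < 6 \<and> e \<in> M i}"

definition fulkerson_family :: "'a set \<Rightarrow> 'a set set \<Rightarrow> (nat \<Rightarrow> 'a set set) \<Rightarrow> bool" where
  "fulkerson_family V E M \<longleftrightarrow>
     (\<forall>i<6. perfect_matching V E (M i)) \<and> (\<forall>e\<in>E. card (colours M e) = 2)"

lemma has_fulkerson_cover_iff_family:
  "has_fulkerson_cover V E \<longleftrightarrow> (\<exists>M. fulkerson_family V E M)"
  unfolding has_fulkerson_cover_def fulkerson_family_def colours_def ..

lemma colours_subset: "colours M e \<subseteq> {..<6}"
  unfolding colours_def by auto

lemma fulkerson_family_unique_colour:
  assumes "fulkerson_family V E M" "v \<in> V" "m < 6"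
  shows "\<exists>!f. f \<in> E \<and> v \<in> f \<and> m \<in> colours M f"
proof -
  have "perfect_matching V E (M m)"
    using assms(1,3) unfolding fulkerson_family_def by simp
  then have "\<exists>!f. f \<in> M m \<and> v \<in> f" "M m \<subseteq> E"
    using assms(2) unfolding perfect_matching_def by simp_all
  moreover have "f \<in> E \<and> v \<in> f \<and> m \<in> colours M f \<longleftrightarrow> f \<in> M m \<and> v \<in> f" for f
    using \<open>M m \<subseteq> E\<close> assms(3) unfolding colours_def by blast
  ultimately show ?thesis
    by simp
qed

lemma unique_colour_transfer:
  assumes unique: "\<exists>!f. f \<in> E \<and> u \<in> f \<and> m \<in> col f"
    and image: "\<And>f. f \<in> E \<Longrightarrow> u \<in> f \<Longrightarrow> \<phi> f \<in> E' \<and> v \<in> \<phi> f \<and> col' (\<phi> f) = col f"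
    and onto: "\<And>e. e \<in> E' \<Longrightarrow> v \<in> e \<Longrightarrow> \<exists>f. f \<in> E \<and> u \<in> f \<and> e = \<phi> f"
  shows "\<exists>!e. e \<in> E' \<and> v \<in> e \<and> m \<in> col' e"
proof -
  obtain f where f: "f \<in> E" "u \<in> f" "m \<in> col f"
    using unique by blast
  show ?thesis
  proof (rule ex1I)
    show "\<phi> f \<in> E' \<and> v \<in> \<phi> f \<and> m \<in> col' (\<phi> f)"
      using image[OF f(1,2)] f(3) by simp
  next
    fix e assume e: "e \<in> E' \<and> v \<in> e \<and> m \<in> col' e"
    then obtain f' where f': "f' \<in> E" "u \<in> f'" "e = \<phi> f'"
      using onto by blast
    then have "m \<in> col f'"
      using image[OF f'(1,2)] e by simp
    then have "f' = f"
      using unique f f' by blast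
    then show "e = \<phi> f"
      using f'(3) by simp
  qed
qed

lemma has_fulkerson_cover_if_colouring:
  fixes col :: "'a set \<Rightarrow> nat set"
  assumes "\<forall>e\<in>E. col e \<subseteq> {..<6} \<and> card (col e) = 2"
    and "\<forall>v\<in>V. \<forall>m<6. \<exists>!e. e \<in> E \<and> v \<in> e \<and> m \<in> col e"
  shows "has_fulkerson_cover V E"
proof -
  define M :: "nat \<Rightarrow> _" where "M m = {e \<in> E. m \<in> col e}" for m
  have "colours M e = col e" if "e \<in> E" for e
    using assms(1) that unfolding colours_def M_def by auto
  moreover have "perfect_matching V E (M m)" if "m < 6" for m
  proof -
    have "e \<in> M m \<and> v \<in> e \<longleftrightarrow> e \<in> E \<and> v \<in> e \<and> m \<in> col e" for e v
      unfolding M_def by blast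
    then show ?thesis
      using assms(2) that unfolding perfect_matching_def by (simp add: M_def)
  qed
  ultimately have "fulkerson_family V E M"
    using assms(1) unfolding fulkerson_family_def by simp
  then show ?thesis
    unfolding has_fulkerson_cover_iff_family by blast
qed

section \<open>Permuting the six colours\<close>

lemma colours_relabel:
  assumes "bij_betw \<tau> {..<6} {..<6}"
  shows "colours (M \<circ> \<tau>) e = {i. i < 6 \<and> \<tau> i \<in> colours M e}"
  using assms unfolding colours_def bij_betw_def by auto

lemma card_relabel_preimage:
  assumes "bij_betw \<tau> S S" "X \<subseteq> S"
  shows "card {i \<in> S. \<tau> i \<in> X} = card X"
proof -
  have "bij_betw \<tau> {i \<in> S. \<tau> i \<in> X} X"
    using assms unfolding bij_betw_def inj_on_def by (auto simp: image_iff)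
  then show ?thesis
    by (rule bij_betw_same_card)
qed

lemma fulkerson_family_relabel:
  assumes "fulkerson_family V E M" "bij_betw \<tau> {..<6} {..<6}"
  shows "fulkerson_family V E (M \<circ> \<tau>)"
  unfolding fulkerson_family_def
proof (intro conjI allI impI ballI)
  fix i :: nat assume "i < 6"
  then have "\<tau> i < 6"
    using assms(2) unfolding bij_betw_def by auto
  then show "perfect_matching V E ((M \<circ> \<tau>) i)"
    using assms(1) unfolding fulkerson_family_def by simp
next
  fix e assume "e \<in> E"
  have "card {i \<in> {..<6}. \<tau> i \<in> colours M e} = card (colours M e)"
    using card_relabel_preimage[OF assms(2) colours_subset] .
  then show "card (colours (M \<circ> \<tau>) e) = 2"
    using assms(1) \<open>e \<in> E\<close> unfolding fulkerson_family_def
    by (simp add: colours_relabel[OF assms(2)])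
qed

lemma relabelled_colours_image:
  assumes "bij_betw \<tau> {..<6} {..<6}" "L \<subseteq> {..<6}" "colours M e = \<tau> ` L"
  shows "colours (M \<circ> \<tau>) e = L"
proof -
  have "inj_on \<tau> {..<6}"
    using assms(1) by (rule bij_betw_imp_inj_on)
  then show ?thesis
    using assms(2,3) inj_on_image_mem_iff[of \<tau> "{..<6}" _ L]
    unfolding colours_relabel[OF assms(1)] by auto
qed

lemma relabelled_colours_mem:
  assumes "bij_betw \<tau> {..<6} {..<6}" "a < 6" "\<tau> a \<in> colours M e"
  shows "a \<in> colours (M \<circ> \<tau>) e"
  using assms unfolding colours_relabel[OF assms(1)] by simp

lemma permutation_extending_list:
  assumes "finite S" "distinct ls" "distinct ts" "length ls = length ts" "set ls \<subseteq> S" "set ts \<subseteq> S"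
  obtains \<tau> where "bij_betw \<tau> S S" "list_all2 (\<lambda>l t. \<tau> l = t) ls ts"
proof -
  have nth_ls: "bij_betw ((!) ls) {..<length ls} (set ls)"
    by (rule bij_betw_nth[OF assms(2)]) simp_all
  have nth_ts: "bij_betw ((!) ts) {..<length ls} (set ts)"
    by (rule bij_betw_nth[OF assms(3)]) (simp_all add: assms(4))
  define f where "f = (!) ts \<circ> the_inv_into {..<length ls} ((!) ls)"
  have f: "bij_betw f (set ls) (set ts)"
    unfolding f_def using bij_betw_trans[OF bij_betw_the_inv_into[OF nth_ls] nth_ts] .
  have f_nth: "f (ls ! i) = ts ! i" if "i < length ls" for i
    unfolding f_def using the_inv_into_f_f[OF bij_betw_imp_inj_on[OF nth_ls]] that by simp
  have "card (S - set ls) = card (S - set ts)"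
    using assms by (simp add: card_Diff_subset distinct_card)
  then obtain g where g: "bij_betw g (S - set ls) (S - set ts)"
    using finite_same_card_bij[of "S - set ls" "S - set ts"] assms(1) by auto
  define \<tau> where "\<tau> l = (if l \<in> set ls then f l else g l)" for l
  have "bij_betw \<tau> (set ls) (set ts)"
    using f bij_betw_cong[of "set ls" \<tau> f "set ts"] by (simp add: \<tau>_def)
  moreover have "bij_betw \<tau> (S - set ls) (S - set ts)"
    using g bij_betw_cong[of "S - set ls" \<tau> g "S - set ts"] by (simp add: \<tau>_def)
  ultimately have "bij_betw \<tau> (set ls \<union> (S - set ls)) (set ts \<union> (S - set ts))"
    by (rule bij_betw_combine) blast
  moreover have "set ls \<union> (S - set ls) = S" "set ts \<union> (S - set ts) = S"
    using assms(5,6) by blast+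
  moreover have "list_all2 (\<lambda>l t. \<tau> l = t) ls ts"
    unfolding list_all2_conv_all_nth using assms(4) f_nth by (simp add: \<tau>_def)
  ultimately show ?thesis
    by (intro that) simp_all
qed

section \<open>Partitions of the six colours into pairs\<close>

definition pair_partition :: "nat set \<Rightarrow> nat set \<Rightarrow> nat set \<Rightarrow> bool" where
  "pair_partition P Q R \<longleftrightarrow> P \<union> Q \<union> R = {..<6} \<and> P \<inter> Q = {} \<and> P \<inter> R = {} \<and> Q \<inter> R = {}
     \<and> card P = 2 \<and> card Q = 2 \<and> card R = 2"

lemma lessThan_6: "{..<6::nat} = {0, 1, 2, 3, 4, 5}"
  by auto

lemma pair_partition_swap23: "pair_partition P Q R \<Longrightarrow> pair_partition P R Q"
  unfolding pair_partition_def by auto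

lemma pair_partition_complement:
  assumes "card Q = 2" "card R = 2" "Q \<inter> R = {}" "Q \<union> R \<subseteq> {..<6}"
  shows "pair_partition Q R ({..<6} - (Q \<union> R))"
proof -
  have "finite Q" "finite R"
    using assms(1,2) by (auto intro: card_ge_0_finite)
  then have "card (Q \<union> R) = 4"
    using assms(1-3) card_Un_disjoint[of Q R] by simp
  then have "card ({..<6} - (Q \<union> R)) = 2"
    using card_Diff_subset[OF _ assms(4)] \<open>finite Q\<close> \<open>finite R\<close> by simp
  then show ?thesis
    using assms unfolding pair_partition_def by auto
qed

lemma pair_partition_third:
  assumes "pair_partition P Q R"
  shows "R = {..<6} - (P \<union> Q)"
proof -
  have "P \<union> Q \<union> R = {..<6}" "P \<inter> R = {}" "Q \<inter> R = {}"
    using assms unfolding pair_partition_def by simp_all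
  then show ?thesis
    by blast
qed

lemma pair_partition_determined:
  assumes PQR: "pair_partition P Q R" and PQR': "pair_partition P Q' R'" and "Q' \<subseteq> Q \<or> R' \<subseteq> R"
  shows "Q' = Q" "R' = R"
proof -
  have eq_if_sub: "X = Y" if "X \<subseteq> Y" "card X = 2" "card Y = 2" for X Y :: "nat set"
    using that by (metis card_subset_eq card.infinite zero_neq_numeral)
  have "card Q = 2" "card Q' = 2" "card R = 2" "card R' = 2"
    using PQR PQR' unfolding pair_partition_def by simp_all
  then have "Q' = Q \<or> R' = R"
    using assms(3) eq_if_sub by blast
  then have "Q' = Q \<and> R' = R"
  proof
    assume "Q' = Q"
    then show ?thesis
      using pair_partition_third[OF PQR] pair_partition_third[OF PQR'] by simp
  next
    assume "R' = R"
    then show ?thesis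
      using pair_partition_third[OF pair_partition_swap23[OF PQR]]
        pair_partition_third[OF pair_partition_swap23[OF PQR']] by simp
  qed
  then show "Q' = Q" "R' = R"
    by simp_all
qed

lemma pair_partitions_cross:
  assumes "pair_partition P Q R" "pair_partition P Q' R'" "Q' \<noteq> Q"
  shows "R \<inter> Q' \<noteq> {}" "Q \<inter> R' \<noteq> {}"
proof -
  have "Q' \<subseteq> Q \<union> R" "R' \<subseteq> Q \<union> R"
    using pair_partition_third[OF assms(1)] pair_partition_third[OF pair_partition_swap23[OF assms(1)]]
      pair_partition_third[OF assms(2)] pair_partition_third[OF pair_partition_swap23[OF assms(2)]]
    by blast+
  then have "R \<inter> Q' = {} \<Longrightarrow> Q' \<subseteq> Q" "Q \<inter> R' = {} \<Longrightarrow> R' \<subseteq> R"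
    by blast+
  then show "R \<inter> Q' \<noteq> {}" "Q \<inter> R' \<noteq> {}"
    using pair_partition_determined(1)[OF assms(1,2)] assms(3) by blast+
qed

lemma pair_partition_elements:
  assumes "pair_partition P Q R"
  obtains p p' where "P = {p, p'}" "p \<noteq> p'" "p < 6" "p' < 6" "p \<notin> Q" "p' \<notin> Q" "p \<notin> R" "p' \<notin> R"
proof -
  obtain p p' where "P = {p, p'}" "p \<noteq> p'"
    using assms unfolding pair_partition_def by (meson card_2_iff)
  moreover have "P \<subseteq> {..<6}" "P \<inter> Q = {}" "P \<inter> R = {}"
    using assms unfolding pair_partition_def by auto
  ultimately show ?thesis
    using that by auto
qed

lemma pair_partition_at_cubic_vertex:
  assumes M: "fulkerson_family V E M" and v: "v \<in> V"
    and inc: "{e \<in> E. v \<in> e} = {e1, e2, e3}" and dist: "e1 \<noteq> e2" "e1 \<noteq> e3" "e2 \<noteq> e3"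
  shows "pair_partition (colours M e1) (colours M e2) (colours M e3)"
proof -
  have two: "\<forall>e\<in>E. card (colours M e) = 2"
    using M unfolding fulkerson_family_def by simp
  have "perfect_matching V E (M i)" if "i < 6" for i
    using M that unfolding fulkerson_family_def by simp
  then have matched: "\<exists>!e. e \<in> M i \<and> v \<in> e" and sub: "M i \<subseteq> E" if "i < 6" for i
    using v that unfolding perfect_matching_def by simp_all
  have cover: "colours M e1 \<union> colours M e2 \<union> colours M e3 = {..<6}"
  proof (intro equalityI subsetI)
    fix i :: nat assume "i \<in> {..<6}"
    then obtain e where "e \<in> M i" "v \<in> e" "i < 6"
      using matched by blast
    then have "e \<in> {e1, e2, e3}"
      using sub inc by blast
    then show "i \<in> colours M e1 \<union> colours M e2 \<union> colours M e3"
      using \<open>e \<in> M i\<close> \<open>i < 6\<close> unfolding colours_def by blast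
  qed (auto simp: colours_def)
  have disjoint: "colours M ea \<inter> colours M eb = {}"
    if "ea \<in> {e1, e2, e3}" "eb \<in> {e1, e2, e3}" "ea \<noteq> eb" for ea eb
  proof -
    have "v \<in> ea" "v \<in> eb"
      using that inc by blast+
    then show ?thesis
      using matched that(3) unfolding colours_def by blast
  qed
  have "colours M e1 \<inter> colours M e2 = {}" "colours M e1 \<inter> colours M e3 = {}"
    "colours M e2 \<inter> colours M e3 = {}"
    using disjoint dist by simp_all
  moreover have "card (colours M e1) = 2" "card (colours M e2) = 2" "card (colours M e3) = 2"
    using two inc by blast+
  ultimately show ?thesis
    using cover unfolding pair_partition_def by (intro conjI) simp_all
qed

lemma unique_colour_at_vertex:
  assumes inc: "{e \<in> E. v \<in> e} = {e1, e2, e3}"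
    and part: "pair_partition (col e1) (col e2) (col e3)" and m: "m < 6"
  shows "\<exists>!e. e \<in> E \<and> v \<in> e \<and> m \<in> col e"
proof -
  have cover: "col e1 \<union> col e2 \<union> col e3 = {..<6}"
    and disj: "col e1 \<inter> col e2 = {}" "col e1 \<inter> col e3 = {}" "col e2 \<inter> col e3 = {}"
    using part unfolding pair_partition_def by simp_all
  obtain e where e: "e \<in> {e1, e2, e3}" "m \<in> col e"
    using cover m by blast
  show ?thesis
  proof (rule ex1I)
    show "e \<in> E \<and> v \<in> e \<and> m \<in> col e"
      using e inc by blast
  next
    fix e' assume "e' \<in> E \<and> v \<in> e' \<and> m \<in> col e'"
    then have "e' \<in> {e1, e2, e3}" "m \<in> col e'"
      using inc by blast+
    then show "e' = e"
      using e disj by auto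
  qed
qed

lemma pair_partitions_representatives:
  assumes PQR: "pair_partition P Q R" and PQR': "pair_partition P Q' R'"
  obtains u v w z where "u \<in> R" "v \<in> Q" "w \<in> Q'" "z \<in> R'" "distinct [u, v, w, z]"
proof (cases "Q' = Q")
  case True
  then have "R' = R"
    using pair_partition_determined[OF PQR PQR'] by simp
  obtain q q' r r' where "Q = {q, q'}" "q \<noteq> q'" "R = {r, r'}" "r \<noteq> r'"
    using PQR unfolding pair_partition_def by (meson card_2_iff)
  moreover have "Q \<inter> R = {}"
    using PQR unfolding pair_partition_def by simp
  ultimately show ?thesis
    using that[of r q q' r'] True \<open>R' = R\<close> by auto
next
  case False
  obtain w z where wz: "w \<in> R \<inter> Q'" "z \<in> Q \<inter> R'"
    using pair_partitions_cross[OF PQR PQR' False] by blast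
  have "card Q = 2" "card R = 2" "Q \<inter> R = {}"
    using PQR unfolding pair_partition_def by simp_all
  then obtain u v where "u \<in> R" "u \<noteq> w" "v \<in> Q" "v \<noteq> z"
    by (metis card_2_iff insertCI)
  then show ?thesis
    using that[of u v w z] wz \<open>Q \<inter> R = {}\<close> by auto
qed

lemma pair_partitions_relabel_apart:
  assumes PQR: "pair_partition P Q R" and PQR': "pair_partition P Q' R'"
    and labels: "pair_partition L {a, a'} {b, b'}"
  obtains \<tau> where "bij_betw \<tau> {..<6} {..<6}" "\<tau> ` L = P" "\<tau> a \<in> R" "\<tau> a' \<in> Q" "\<tau> b \<in> Q'" "\<tau> b' \<in> R'"
proof -
  obtain l l' where l: "L = {l, l'}" "l \<noteq> l'" "l < 6" "l' < 6" "l \<notin> {a, a'}" "l' \<notin> {a, a'}"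
    "l \<notin> {b, b'}" "l' \<notin> {b, b'}"
    using pair_partition_elements[OF labels] by blast
  obtain p p' where p: "P = {p, p'}" "p \<noteq> p'" "p < 6" "p' < 6" "p \<notin> Q" "p' \<notin> Q" "p \<notin> R" "p' \<notin> R"
    using pair_partition_elements[OF PQR] by blast
  obtain u v w z where uvwz: "u \<in> R" "v \<in> Q" "w \<in> Q'" "z \<in> R'" "distinct [u, v, w, z]"
    using pair_partitions_representatives[OF PQR PQR'] by blast
  have "a \<noteq> a'" "b \<noteq> b'" "{a, a'} \<inter> {b, b'} = {}" "{a, a', b, b'} \<subseteq> {..<6}"
    using labels unfolding pair_partition_def by (auto simp: card_2_iff doubleton_eq_iff)
  then have ls: "distinct [l, l', a, a', b, b']" "set [l, l', a, a', b, b'] \<subseteq> {..<6}"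
    using l by auto
  have "p \<notin> Q'" "p' \<notin> Q'" "p \<notin> R'" "p' \<notin> R'"
    using PQR' p(1) unfolding pair_partition_def by auto
  moreover have "Q \<union> R \<subseteq> {..<6}" "Q' \<union> R' \<subseteq> {..<6}"
    using PQR PQR' unfolding pair_partition_def by auto
  ultimately have ts: "distinct [p, p', u, v, w, z]" "set [p, p', u, v, w, z] \<subseteq> {..<6}"
    using p uvwz by auto
  have "length [l, l', a, a', b, b'] = length [p, p', u, v, w, z]"
    by simp
  then obtain \<tau> where "bij_betw \<tau> {..<6} {..<6}"
      "list_all2 (\<lambda>l t. \<tau> l = t) [l, l', a, a', b, b'] [p, p', u, v, w, z]"
    using permutation_extending_list[OF finite_lessThan ls(1) ts(1) _ ls(2) ts(2)] by blast
  then show ?thesis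
    using that uvwz(1-4) l(1) p(1) by auto
qed

lemma pair_partitions_relabel_shared:
  assumes PQR: "pair_partition P Q R" and PQR': "pair_partition P Q' R'"
    and labels: "pair_partition L {a, a'} T"
  obtains \<tau> where "bij_betw \<tau> {..<6} {..<6}" "\<tau> ` L = P" "\<tau> a \<in> R" "\<tau> a' \<in> Q"
    "Q' \<noteq> Q \<Longrightarrow> \<tau> a \<in> Q' \<and> \<tau> a' \<in> R'"
proof -
  obtain l l' where l: "L = {l, l'}" "l \<noteq> l'" "l < 6" "l' < 6" "l \<notin> {a, a'}" "l' \<notin> {a, a'}"
    using pair_partition_elements[OF labels] by blast
  obtain p p' where p: "P = {p, p'}" "p \<noteq> p'" "p < 6" "p' < 6" "p \<notin> Q" "p' \<notin> Q" "p \<notin> R" "p' \<notin> R"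
    using pair_partition_elements[OF PQR] by blast
  obtain u v where uv: "u \<in> R" "v \<in> Q" "Q' \<noteq> Q \<Longrightarrow> u \<in> Q' \<and> v \<in> R'"
  proof (cases "Q' = Q")
    case True
    obtain u v where "u \<in> R" "v \<in> Q"
      using PQR unfolding pair_partition_def by (metis card_2_iff insertCI)
    then show ?thesis
      using that True by blast
  next
    case False
    then show ?thesis
      using that pair_partitions_cross[OF PQR PQR'] by blast
  qed
  have "a \<noteq> a'" "{a, a'} \<subseteq> {..<6}"
    using labels unfolding pair_partition_def by (auto simp: card_2_iff doubleton_eq_iff)
  then have ls: "distinct [l, l', a, a']" "set [l, l', a, a'] \<subseteq> {..<6}"
    using l by auto
  have "Q \<union> R \<subseteq> {..<6}" "Q \<inter> R = {}"
    using PQR unfolding pair_partition_def by auto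
  then have ts: "distinct [p, p', u, v]" "set [p, p', u, v] \<subseteq> {..<6}"
    using p uv(1,2) by auto
  have "length [l, l', a, a'] = length [p, p', u, v]"
    by simp
  then obtain \<tau> where "bij_betw \<tau> {..<6} {..<6}" "list_all2 (\<lambda>l t. \<tau> l = t) [l, l', a, a'] [p, p', u, v]"
    using permutation_extending_list[OF finite_lessThan ls(1) ts(1) _ ls(2) ts(2)] by blast
  then show ?thesis
    using that uv l(1) p(1) by auto
qed

lemma pair_partition_junction:
  assumes y: "pair_partition P Qy Ry" and x: "pair_partition P' Qx Rx"
    and T: "pair_partition P P' {t, t'}"
    and t: "t \<in> Qy" "t' \<in> Ry" "t \<in> Rx" "t' \<in> Qx"
  shows "pair_partition Qy Qx ({..<6} - (Qy \<union> Qx))"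
    "pair_partition Ry Rx ({..<6} - (Ry \<union> Rx))"
    "pair_partition ({..<6} - (Qy \<union> Qx)) ({..<6} - (Ry \<union> Rx)) {t, t'}"
proof -
  have yP: "m \<in> Qy \<or> m \<in> Ry \<longleftrightarrow> m < 6 \<and> m \<notin> P" "Qy \<inter> Ry = {}" "card Qy = 2" "card Ry = 2" for m
    using y unfolding pair_partition_def by auto
  have xP: "m \<in> Qx \<or> m \<in> Rx \<longleftrightarrow> m < 6 \<and> m \<notin> P'" "Qx \<inter> Rx = {}" "card Qx = 2" "card Rx = 2" for m
    using x unfolding pair_partition_def by auto
  have TP: "m < 6 \<longleftrightarrow> m \<in> P \<or> m \<in> P' \<or> m = t \<or> m = t'" "P \<inter> P' = {}" "card {t, t'} = 2" for m
    using T unfolding pair_partition_def by auto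
  have t_not: "t \<notin> Ry" "t \<notin> Qx" "t' \<notin> Qy" "t' \<notin> Rx"
    using t yP(2) xP(2) by blast+
  have "Qy \<inter> Qx = {}" "Ry \<inter> Rx = {}"
    using yP(1) xP(1) TP(1,2) t_not by blast+
  moreover have "Qy \<union> Qx \<subseteq> {..<6}" "Ry \<union> Rx \<subseteq> {..<6}"
    using yP(1) xP(1) lessThan_iff by blast+
  ultimately show Q: "pair_partition Qy Qx ({..<6} - (Qy \<union> Qx))"
    and R: "pair_partition Ry Rx ({..<6} - (Ry \<union> Rx))"
    using pair_partition_complement yP(3,4) xP(3,4) by simp_all
  have "card ({..<6} - (Qy \<union> Qx)) = 2" "card ({..<6} - (Ry \<union> Rx)) = 2"
    using Q R unfolding pair_partition_def by simp_all
  moreover have "({..<6} - (Qy \<union> Qx)) \<union> ({..<6} - (Ry \<union> Rx)) \<union> {t, t'} = {..<6}"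
    using yP(1,2) xP(1,2) TP(1,2) lessThan_iff by blast
  moreover have "({..<6} - (Qy \<union> Qx)) \<inter> ({..<6} - (Ry \<union> Rx)) = {}"
    using yP(1) xP(1) TP(1,2) lessThan_iff by blast
  moreover have "({..<6} - (Qy \<union> Qx)) \<inter> {t, t'} = {}" "({..<6} - (Ry \<union> Rx)) \<inter> {t, t'} = {}"
    using t by blast+
  ultimately show "pair_partition ({..<6} - (Qy \<union> Qx)) ({..<6} - (Ry \<union> Rx)) {t, t'}"
    using TP(3) unfolding pair_partition_def by (intro conjI) assumption+
qed

locale M_construction =
  fixes k :: nat and V :: "nat \<Rightarrow> 'a set" and E :: "nat \<Rightarrow> 'a set set"
    and x y x0 x1 y0 y1 :: "nat \<Rightarrow> 'a"
  assumes k_ge_4: "4 \<le> k" and k_even: "even k"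
    and admissible: "\<And>i. i < k \<Longrightarrow> admissible_piece (V i) (E i) (x i) (y i) (x0 i) (x1 i) (y0 i) (y1 i)"
begin

lemma piece:
  assumes "i < k"
  shows "cubic (V i) (E i)" "graph (V i) (E i)" "has_fulkerson_cover (V i) (E i)"
    "{x i, y i} \<in> E i" "{x i, x0 i} \<in> E i" "{x i, x1 i} \<in> E i" "{y i, y0 i} \<in> E i" "{y i, y1 i} \<in> E i"
    "x0 i \<noteq> x1 i" "x0 i \<noteq> y i" "x1 i \<noteq> y i" "y0 i \<noteq> y1 i" "y0 i \<noteq> x i" "y1 i \<noteq> x i"
  using admissible[OF assms] unfolding admissible_piece_def cubic_def by simp_all

lemma piece_ends:
  assumes "i < k"
  shows "x i \<noteq> y i" "x i \<in> V i" "y i \<in> V i" "x0 i \<noteq> x i" "x1 i \<noteq> x i" "y0 i \<noteq> y i" "y1 i \<noteq> y i"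
  using graph_edgeD[OF piece(2)[OF assms] piece(4)[OF assms]]
    graph_edgeD(1)[OF piece(2)[OF assms] piece(5)[OF assms]]
    graph_edgeD(1)[OF piece(2)[OF assms] piece(6)[OF assms]]
    graph_edgeD(1)[OF piece(2)[OF assms] piece(7)[OF assms]]
    graph_edgeD(1)[OF piece(2)[OF assms] piece(8)[OF assms]] by auto

lemma edges_at_x:
  assumes "i < k"
  shows "{e \<in> E i. x i \<in> e} = {{x i, y i}, {x i, x0 i}, {x i, x1 i}}"
  using piece[OF assms] piece_ends[OF assms]
  by (intro cubic_incident_edges) (auto simp: doubleton_eq_iff)

lemma edges_at_y:
  assumes "i < k"
  shows "{e \<in> E i. y i \<in> e} = {{x i, y i}, {y i, y0 i}, {y i, y1 i}}"
  using piece[OF assms] piece_ends[OF assms]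
  by (intro cubic_incident_edges) (auto simp: doubleton_eq_iff)

lemma neighbour_of_x:
  assumes "i < k" "{u, x i} \<in> E i" "u \<noteq> y i"
  shows "u = x0 i \<or> u = x1 i"
proof -
  have "{u, x i} \<in> {e \<in> E i. x i \<in> e}"
    using assms(2) by simp
  then show ?thesis
    using edges_at_x[OF assms(1)] assms(3) by (auto simp: doubleton_eq_iff)
qed

lemma neighbour_of_y:
  assumes "i < k" "{u, y i} \<in> E i" "u \<noteq> x i"
  shows "u = y0 i \<or> u = y1 i"
proof -
  have "{u, y i} \<in> {e \<in> E i. y i \<in> e}"
    using assms(2) by simp
  then show ?thesis
    using edges_at_y[OF assms(1)] assms(3) by (auto simp: doubleton_eq_iff)
qed

lemma pair_partition_at_x:
  assumes "i < k" "fulkerson_family (V i) (E i) M"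
  shows "pair_partition (colours M {x i, y i}) (colours M {x i, x0 i}) (colours M {x i, x1 i})"
  using piece[OF assms(1)] piece_ends[OF assms(1)]
  by (intro pair_partition_at_cubic_vertex[OF assms(2) _ edges_at_x[OF assms(1)]])
    (auto simp: doubleton_eq_iff)

lemma pair_partition_at_y:
  assumes "i < k" "fulkerson_family (V i) (E i) M"
  shows "pair_partition (colours M {x i, y i}) (colours M {y i, y0 i}) (colours M {y i, y1 i})"
  using piece[OF assms(1)] piece_ends[OF assms(1)]
  by (intro pair_partition_at_cubic_vertex[OF assms(2) _ edges_at_y[OF assms(1)]])
    (auto simp: doubleton_eq_iff)

definition succ_mod :: "nat \<Rightarrow> nat" where
  "succ_mod j = Suc j mod k"

definition pred_mod :: "nat \<Rightarrow> nat" where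
  "pred_mod i = (if i = 0 then k - 1 else i - 1)"

lemma succ_mod_eq: "j < k \<Longrightarrow> succ_mod j = (if Suc j = k then 0 else Suc j)"
  unfolding succ_mod_def by simp

lemma succ_mod_lt: "succ_mod j < k"
  unfolding succ_mod_def using k_ge_4 by simp

lemma succ_mod_neq: "j < k \<Longrightarrow> succ_mod j \<noteq> j"
  using succ_mod_eq[of j] k_ge_4 by auto

lemma pred_mod_lt: "i < k \<Longrightarrow> pred_mod i < k"
  unfolding pred_mod_def by auto

lemma succ_pred_mod: "i < k \<Longrightarrow> succ_mod (pred_mod i) = i"
  using succ_mod_eq[OF pred_mod_lt, of i] unfolding pred_mod_def using k_ge_4 by auto

lemma pred_succ_mod: "j < k \<Longrightarrow> pred_mod (succ_mod j) = j"
  using succ_mod_eq[of j] unfolding pred_mod_def using k_ge_4 by auto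

section \<open>Normalised covers of the pieces\<close>

text \<open>The path c_1 v_0 ... v_{k-3} c_0 is labelled alternately {0,1} and {2,3}, beginning and
  ending with {0,1}, and the pendant edges c_i v_{i-2} are labelled {4,5}; so the third edge at c_j
  is labelled junction_colours j.\<close>

definition xy_colours :: "nat \<Rightarrow> nat set" where
  "xy_colours i = (if i = 1 then {4, 5} else if even i then {2, 3} else {0, 1})"

definition junction_colours :: "nat \<Rightarrow> nat set" where
  "junction_colours j = (if j \<le> 1 then {0, 1} else {4, 5})"

definition path_colours :: "nat \<Rightarrow> nat set" where
  "path_colours t = (if even t then {2, 3} else {0, 1})"

lemma junction_pair_partition:
  assumes j: "j < k"
  shows "pair_partition (xy_colours j) (xy_colours (succ_mod j)) (junction_colours j)"
proof -
  consider "j = 0" | "j = 1" | "2 \<le> j" "Suc j < k" | "Suc j = k"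
    using j k_ge_4 by linarith
  then show ?thesis
  proof cases
    case 1
    then have "succ_mod j = 1"
      using succ_mod_eq[OF j] k_ge_4 by simp
    then show ?thesis
      using 1 unfolding pair_partition_def xy_colours_def junction_colours_def lessThan_6 by auto
  next
    case 2
    then have "succ_mod j = 2"
      using succ_mod_eq[OF j] k_ge_4 by simp
    then show ?thesis
      using 2 unfolding pair_partition_def xy_colours_def junction_colours_def lessThan_6 by auto
  next
    case 3
    then have "succ_mod j = Suc j" "junction_colours j = {4, 5}"
      using succ_mod_eq[OF j] unfolding junction_colours_def by simp_all
    moreover have "xy_colours j = {2, 3} \<and> xy_colours (Suc j) = {0, 1}
        \<or> xy_colours j = {0, 1} \<and> xy_colours (Suc j) = {2, 3}"
      using 3 unfolding xy_colours_def by auto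
    ultimately show ?thesis
      unfolding pair_partition_def lessThan_6 by auto
  next
    case 4
    then have "succ_mod j = 0" "odd j" "j \<noteq> 1"
      using succ_mod_eq[OF j] k_even k_ge_4 by auto
    then show ?thesis
      using 4 k_ge_4 unfolding pair_partition_def xy_colours_def junction_colours_def lessThan_6
      by auto
  qed
qed

definition base_cover :: "nat \<Rightarrow> nat \<Rightarrow> 'a set set" where
  "base_cover i = (SOME M. fulkerson_family (V i) (E i) M)"

lemma base_cover: "i < k \<Longrightarrow> fulkerson_family (V i) (E i) (base_cover i)"
  unfolding base_cover_def using piece(3) has_fulkerson_cover_iff_family by (metis someI_ex)

definition parallel :: "nat \<Rightarrow> bool" where
  "parallel i \<longleftrightarrow> colours (base_cover i) {x i, x0 i} = colours (base_cover i) {y i, y0 i}"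

text \<open>junction_colour0 j is the colour shared by y_j y_j^0 and x_{j+1} x_{j+1}^1.  Pieces 1 and
  i \<ge> 3 see the same colour pair at both of their junctions, so the orientation at junction i is
  forced by the one at junction i - 1 and flips exactly when x_i x_i^0 and y_i y_i^0 lie in the
  same two matchings.  Pieces 0 and 2 see disjoint pairs and accept any orientation, so no
  consistency condition arises around the cycle.\<close>

fun flipped :: "nat \<Rightarrow> bool" where
  "flipped 0 = False"
| "flipped (Suc j) = (if j = 1 then False else flipped j \<noteq> parallel (Suc j))"

definition junction_colour0 :: "nat \<Rightarrow> nat" where
  "junction_colour0 j = (if j \<le> 1 then 0 else 4) + (if flipped j then 1 else 0)"

definition junction_colour1 :: "nat \<Rightarrow> nat" where
  "junction_colour1 j = (if j \<le> 1 then 0 else 4) + (if flipped j then 0 else 1)"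

lemma junction_colours_eq: "junction_colours j = {junction_colour0 j, junction_colour1 j}"
  unfolding junction_colours_def junction_colour0_def junction_colour1_def by auto

lemma junction_colour_step:
  assumes "i = 1 \<or> 3 \<le> i"
  shows "junction_colour0 i =
      (if parallel i then junction_colour1 (pred_mod i) else junction_colour0 (pred_mod i))"
    "junction_colour1 i =
      (if parallel i then junction_colour0 (pred_mod i) else junction_colour1 (pred_mod i))"
  using assms by (cases i; auto simp: pred_mod_def junction_colour0_def junction_colour1_def)+

definition normalised :: "nat \<Rightarrow> (nat \<Rightarrow> 'a set set) \<Rightarrow> bool" where
  "normalised i M \<longleftrightarrow> fulkerson_family (V i) (E i) M \<and> colours M {x i, y i} = xy_colours i
     \<and> junction_colour0 (pred_mod i) \<in> colours M {x i, x1 i}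
     \<and> junction_colour1 (pred_mod i) \<in> colours M {x i, x0 i}
     \<and> junction_colour0 i \<in> colours M {y i, y0 i} \<and> junction_colour1 i \<in> colours M {y i, y1 i}"

lemma normalised_relabel:
  assumes i: "i < k" and \<tau>: "bij_betw \<tau> {..<6} {..<6}"
    "\<tau> ` xy_colours i = colours (base_cover i) {x i, y i}"
    "\<tau> (junction_colour0 (pred_mod i)) \<in> colours (base_cover i) {x i, x1 i}"
    "\<tau> (junction_colour1 (pred_mod i)) \<in> colours (base_cover i) {x i, x0 i}"
    "\<tau> (junction_colour0 i) \<in> colours (base_cover i) {y i, y0 i}"
    "\<tau> (junction_colour1 i) \<in> colours (base_cover i) {y i, y1 i}"
  shows "normalised i (base_cover i \<circ> \<tau>)"
proof -
  have "xy_colours i \<subseteq> {..<6}"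
    unfolding xy_colours_def by auto
  moreover have "junction_colour0 (pred_mod i) < 6" "junction_colour1 (pred_mod i) < 6"
    "junction_colour0 i < 6" "junction_colour1 i < 6"
    unfolding junction_colour0_def junction_colour1_def by auto
  ultimately show ?thesis
    unfolding normalised_def
    using fulkerson_family_relabel[OF base_cover[OF i] \<tau>(1)]
      relabelled_colours_image[OF \<tau>(1) _ \<tau>(2)[symmetric]] relabelled_colours_mem[OF \<tau>(1)] \<tau>(3-6)
    by blast
qed

lemma normalised_exists_apart:
  assumes i: "i < k" and "i = 0 \<or> i = 2"
  shows "\<exists>M. normalised i M"
proof -
  have "pair_partition {2, 3} {4, 5} {0, 1}" "pair_partition {2, 3} {0, 1} {4, 5}"
    unfolding pair_partition_def lessThan_6 by auto
  moreover have "pred_mod i = k - 1 \<and> i = 0 \<or> pred_mod i = 1 \<and> i = 2"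
    using assms(2) unfolding pred_mod_def by auto
  ultimately have "pair_partition (xy_colours i) (junction_colours (pred_mod i)) (junction_colours i)"
    using k_ge_4 unfolding xy_colours_def junction_colours_def by auto
  then have "pair_partition (xy_colours i) {junction_colour0 (pred_mod i), junction_colour1 (pred_mod i)}
      {junction_colour0 i, junction_colour1 i}"
    unfolding junction_colours_eq .
  then obtain \<tau> where "bij_betw \<tau> {..<6} {..<6}"
    "\<tau> ` xy_colours i = colours (base_cover i) {x i, y i}"
    "\<tau> (junction_colour0 (pred_mod i)) \<in> colours (base_cover i) {x i, x1 i}"
    "\<tau> (junction_colour1 (pred_mod i)) \<in> colours (base_cover i) {x i, x0 i}"
    "\<tau> (junction_colour0 i) \<in> colours (base_cover i) {y i, y0 i}"
    "\<tau> (junction_colour1 i) \<in> colours (base_cover i) {y i, y1 i}"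
    by (rule pair_partitions_relabel_apart[OF pair_partition_at_x[OF i base_cover[OF i]]
          pair_partition_at_y[OF i base_cover[OF i]]])
  then show ?thesis
    using normalised_relabel[OF i] by blast
qed

lemma normalised_exists_shared:
  assumes i: "i < k" and shared: "i = 1 \<or> 3 \<le> i"
  shows "\<exists>M. normalised i M"
proof -
  let ?N = "base_cover i"
  let ?a = "junction_colour0 (pred_mod i)" and ?a' = "junction_colour1 (pred_mod i)"
  have px: "pair_partition (colours ?N {x i, y i}) (colours ?N {x i, x0 i}) (colours ?N {x i, x1 i})"
    and py: "pair_partition (colours ?N {x i, y i}) (colours ?N {y i, y0 i}) (colours ?N {y i, y1 i})"
    using pair_partition_at_x[OF i base_cover[OF i]] pair_partition_at_y[OF i base_cover[OF i]] .
  have "junction_colours (pred_mod i) = junction_colours i"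
    using shared unfolding pred_mod_def junction_colours_def by auto
  then have "pair_partition (xy_colours i) {?a, ?a'} (xy_colours (succ_mod i))"
    using pair_partition_swap23[OF junction_pair_partition[OF i]]
    unfolding junction_colours_eq by simp
  then obtain \<tau> where \<tau>: "bij_betw \<tau> {..<6} {..<6}" "\<tau> ` xy_colours i = colours ?N {x i, y i}"
    "\<tau> ?a \<in> colours ?N {x i, x1 i}" "\<tau> ?a' \<in> colours ?N {x i, x0 i}"
    "\<not> parallel i \<Longrightarrow> \<tau> ?a \<in> colours ?N {y i, y0 i} \<and> \<tau> ?a' \<in> colours ?N {y i, y1 i}"
    unfolding parallel_def by (rule pair_partitions_relabel_shared[OF px py]) auto
  have "\<tau> (junction_colour0 i) \<in> colours ?N {y i, y0 i} \<and> \<tau> (junction_colour1 i) \<in> colours ?N {y i, y1 i}"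
  proof (cases "parallel i")
    case True
    then have "colours ?N {y i, y0 i} = colours ?N {x i, x0 i}"
      "colours ?N {y i, y1 i} = colours ?N {x i, x1 i}"
      using pair_partition_determined[OF px py] unfolding parallel_def by simp_all
    then show ?thesis
      using True \<tau>(3,4) junction_colour_step[OF shared] by simp
  next
    case False
    then show ?thesis
      using \<tau>(5) junction_colour_step[OF shared] by simp
  qed
  then show ?thesis
    using normalised_relabel[OF i \<tau>(1-4)] by blast
qed

lemma normalised_exists:
  assumes "i < k"
  shows "\<exists>M. normalised i M"
proof (cases "i = 0 \<or> i = 2")
  case True
  then show ?thesis
    by (rule normalised_exists_apart[OF assms])
next
  case False
  then have "i = 1 \<or> 3 \<le> i"
    by linarith
  then show ?thesis
    by (rule normalised_exists_shared[OF assms])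
qed

definition cover :: "nat \<Rightarrow> nat \<Rightarrow> 'a set set" where
  "cover i = (SOME M. normalised i M)"

lemma cover_normalised: "i < k \<Longrightarrow> normalised i (cover i)"
  unfolding cover_def using normalised_exists by (rule someI_ex)

lemma cover_fulkerson: "i < k \<Longrightarrow> fulkerson_family (V i) (E i) (cover i)"
  using cover_normalised unfolding normalised_def by blast

abbreviation "cxy i \<equiv> colours (cover i) {x i, y i}"
abbreviation "cx0 i \<equiv> colours (cover i) {x i, x0 i}"
abbreviation "cx1 i \<equiv> colours (cover i) {x i, x1 i}"
abbreviation "cy0 i \<equiv> colours (cover i) {y i, y0 i}"
abbreviation "cy1 i \<equiv> colours (cover i) {y i, y1 i}"

lemma junction_partitions:
  assumes j: "j < k"
  shows "pair_partition (cy0 j) (cx0 (succ_mod j)) ({..<6} - (cy0 j \<union> cx0 (succ_mod j)))"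
    "pair_partition (cy1 j) (cx1 (succ_mod j)) ({..<6} - (cy1 j \<union> cx1 (succ_mod j)))"
    "pair_partition ({..<6} - (cy0 j \<union> cx0 (succ_mod j))) ({..<6} - (cy1 j \<union> cx1 (succ_mod j)))
       (junction_colours j)"
proof -
  have j': "succ_mod j < k"
    by (rule succ_mod_lt)
  have nj: "normalised j (cover j)" and nj': "normalised (succ_mod j) (cover (succ_mod j))"
    using cover_normalised j j' by blast+
  note junction = pair_partition_junction[OF pair_partition_at_y[OF j cover_fulkerson[OF j]]
      pair_partition_at_x[OF j' cover_fulkerson[OF j']]]
  have "pair_partition (cxy j) (cxy (succ_mod j)) {junction_colour0 j, junction_colour1 j}"
    using junction_pair_partition[OF j] nj nj' junction_colours_eq unfolding normalised_def by simp
  moreover have "junction_colour0 j \<in> cy0 j" "junction_colour1 j \<in> cy1 j"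
    "junction_colour0 j \<in> cx1 (succ_mod j)" "junction_colour1 j \<in> cx0 (succ_mod j)"
    using nj nj' pred_succ_mod[OF j] unfolding normalised_def by simp_all
  ultimately show "pair_partition (cy0 j) (cx0 (succ_mod j)) ({..<6} - (cy0 j \<union> cx0 (succ_mod j)))"
    "pair_partition (cy1 j) (cx1 (succ_mod j)) ({..<6} - (cy1 j \<union> cx1 (succ_mod j)))"
    "pair_partition ({..<6} - (cy0 j \<union> cx0 (succ_mod j))) ({..<6} - (cy1 j \<union> cx1 (succ_mod j)))
       (junction_colours j)"
    using junction junction_colours_eq by simp_all
qed

lemma cpath_length: "length (cpath k :: 'a mv list) = k"
  unfolding cpath_def using k_ge_4 by simp

lemma cpath_nth:
  assumes "i < k"
  shows "(cpath k :: 'a mv list) ! i = (if i = 0 then C 1 else if i < k - 1 then Vv (i - 1) else C 0)"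
proof (cases i)
  case 0
  then show ?thesis
    unfolding cpath_def by simp
next
  case (Suc j)
  then have "(cpath k :: 'a mv list) ! i = (map Vv [0..<k - 2] @ [C 0]) ! j"
    unfolding cpath_def by simp
  also have "\<dots> = (if j < k - 2 then Vv j else C 0)"
    using assms Suc by (simp add: nth_append)
  finally show ?thesis
    using Suc assms by auto
qed

lemma cpath_consecutive:
  assumes i: "Suc i < k"
  shows "{(cpath k :: 'a mv list) ! i, cpath k ! Suc i} =
    (if i = 0 then {C 1, Vv 0} else if Suc i < k - 1 then {Vv (i - 1), Vv i} else {Vv (k - 3), C 0})"
proof -
  consider "i = 0" | "0 < i" "Suc i < k - 1" | "0 < i" "Suc i = k - 1"
    using i by linarith
  then show ?thesis
  proof cases
    case 1
    then show ?thesis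
      using k_ge_4 cpath_nth[of 0] cpath_nth[of 1] by (simp add: less_diff_conv)
  next
    case 2
    then show ?thesis
      using i cpath_nth[of i] cpath_nth[of "Suc i"] by simp
  next
    case 3
    then have "i - 1 = k - 3" "i < k - 1" "\<not> Suc i < k - 1"
      by simp_all
    then show ?thesis
      using i cpath_nth[of i] cpath_nth[of "Suc i"] 3 k_ge_4 by simp
  qed
qed

lemma cpath_edges:
  "{{(cpath k :: 'a mv list) ! i, cpath k ! Suc i} | i. Suc i < length (cpath k :: 'a mv list)}
   = {{C 1, Vv 0}} \<union> {{Vv t, Vv (Suc t)} | t. t + 3 < k} \<union> {{Vv (k - 3), C 0}}"
  (is "?L = ?R")
proof
  show "?L \<subseteq> ?R"
  proof
    fix e assume "e \<in> ?L"
    then obtain i where i: "Suc i < k" "e = {(cpath k :: 'a mv list) ! i, cpath k ! Suc i}"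
      using cpath_length by auto
    show "e \<in> ?R"
    proof (cases "i = 0 \<or> Suc i = k - 1")
      case True
      then show ?thesis
        using i cpath_consecutive[OF i(1)] by auto
    next
      case False
      then have "e = {Vv (i - 1), Vv (Suc (i - 1))}" "i - 1 + 3 < k"
        using i cpath_consecutive[OF i(1)] by auto
      then show ?thesis
        by blast
    qed
  qed
  have consecutive: "{(cpath k :: 'a mv list) ! i, cpath k ! Suc i} \<in> ?L" if "Suc i < k" for i
    using that cpath_length by auto
  have "{C 1, Vv 0} \<in> ?L"
    using consecutive[of 0] cpath_consecutive[of 0] k_ge_4 by simp
  moreover have "Suc (k - 2) < k" "k - 2 \<noteq> 0" "\<not> Suc (k - 2) < k - 1"
    using k_ge_4 by simp_all
  then have "{Vv (k - 3), C 0} \<in> ?L"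
    using consecutive[of "k - 2"] cpath_consecutive[of "k - 2"] by simp
  moreover have "{Vv t, Vv (Suc t)} \<in> ?L" if "t + 3 < k" for t
  proof -
    have "Suc (Suc t) < k" "Suc (Suc t) < k - 1"
      using that by simp_all
    then show ?thesis
      using consecutive[of "Suc t"] cpath_consecutive[of "Suc t"] by simp
  qed
  ultimately show "?R \<subseteq> ?L"
    by blast
qed

abbreviation "VG \<equiv> constr_vertices k V x y"
abbreviation "EG \<equiv> constr_edges k E x y x0 x1 y0 y1"

lemma VG_iff:
  "v \<in> VG \<longleftrightarrow> (\<exists>i u. v = Hv i u \<and> i < k \<and> u \<in> V i \<and> u \<noteq> x i \<and> u \<noteq> y i) \<or>
     (\<exists>j<k. v = A j) \<or> (\<exists>j<k. v = B j) \<or> (\<exists>j<k. v = C j) \<or> (\<exists>t. v = Vv t \<and> t + 2 < k)"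
  unfolding constr_vertices_def by auto

lemma EG_iff:
  "e \<in> EG \<longleftrightarrow>
    (\<exists>i u w. e = {Hv i u, Hv i w} \<and> i < k \<and> {u, w} \<in> E i \<and> x i \<notin> {u, w} \<and> y i \<notin> {u, w}) \<or>
    (\<exists>j<k. e = {A j, Hv j (y0 j)} \<or> e = {A j, Hv (succ_mod j) (x0 (succ_mod j))} \<or>
      e = {B j, Hv j (y1 j)} \<or> e = {B j, Hv (succ_mod j) (x1 (succ_mod j))} \<or>
      e = {A j, C j} \<or> e = {B j, C j}) \<or>
    e = {C 1, Vv 0} \<or> (\<exists>t. e = {Vv t, Vv (Suc t)} \<and> t + 3 < k) \<or> e = {Vv (k - 3), C 0} \<or>
    (\<exists>i. e = {C i, Vv (i - 2)} \<and> 2 \<le> i \<and> i < k)"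
  unfolding constr_edges_def cpath_edges succ_mod_def[symmetric]
  by (simp only: Un_iff mem_Collect_eq UN_iff insert_iff empty_iff lessThan_iff Bex_def disj_assoc
      simp_thms)

lemma EG_cases:
  assumes "e \<in> EG"
  obtains (internal) i u w where "i < k" "e = {Hv i u, Hv i w}" "{u, w} \<in> E i" "x i \<notin> {u, w}" "y i \<notin> {u, w}"
  | (Ay) j where "j < k" "e = {A j, Hv j (y0 j)}"
  | (Ax) j where "j < k" "e = {A j, Hv (succ_mod j) (x0 (succ_mod j))}"
  | (By) j where "j < k" "e = {B j, Hv j (y1 j)}"
  | (Bx) j where "j < k" "e = {B j, Hv (succ_mod j) (x1 (succ_mod j))}"
  | (AC) j where "j < k" "e = {A j, C j}"
  | (BC) j where "j < k" "e = {B j, C j}"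
  | (C1) "e = {C 1, Vv 0}"
  | (path) t where "t + 3 < k" "e = {Vv t, Vv (Suc t)}"
  | (C0) "e = {Vv (k - 3), C 0}"
  | (pendant) i where "2 \<le> i" "i < k" "e = {C i, Vv (i - 2)}"
  using assms unfolding EG_iff by (elim disjE exE conjE) (rule that; assumption)+

lemma EG_memberI:
  assumes "j < k"
  shows "{A j, Hv j (y0 j)} \<in> EG" "{A j, Hv (succ_mod j) (x0 (succ_mod j))} \<in> EG"
    "{B j, Hv j (y1 j)} \<in> EG" "{B j, Hv (succ_mod j) (x1 (succ_mod j))} \<in> EG"
    "{A j, C j} \<in> EG" "{B j, C j} \<in> EG"
  using assms unfolding EG_iff by (simp_all add: doubleton_eq_iff) blast+

lemma EG_internalI:
  "i < k \<Longrightarrow> {u, w} \<in> E i \<Longrightarrow> x i \<notin> {u, w} \<Longrightarrow> y i \<notin> {u, w} \<Longrightarrow> {Hv i u, Hv i w} \<in> EG"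
  by (simp add: EG_iff doubleton_eq_iff) blast

lemma EG_pathI:
  "{C 1, Vv 0} \<in> EG" "t + 3 < k \<Longrightarrow> {Vv t, Vv (Suc t)} \<in> EG" "{Vv (k - 3), C 0} \<in> EG"
  "2 \<le> i \<Longrightarrow> i < k \<Longrightarrow> {C i, Vv (i - 2)} \<in> EG"
  unfolding EG_iff by (simp_all add: doubleton_eq_iff) blast

section \<open>The colouring of the construction\<close>

definition colour :: "'a mv set \<Rightarrow> nat set" where
  "colour e = {m. m < 6 \<and>
     ((\<exists>i u w. i < k \<and> e = {Hv i u, Hv i w} \<and> {u, w} \<in> cover i m) \<or>
      (\<exists>j<k. e = {A j, Hv j (y0 j)} \<and> {y j, y0 j} \<in> cover j m) \<or>
      (\<exists>j<k. e = {A j, Hv (succ_mod j) (x0 (succ_mod j))}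
         \<and> {x (succ_mod j), x0 (succ_mod j)} \<in> cover (succ_mod j) m) \<or>
      (\<exists>j<k. e = {B j, Hv j (y1 j)} \<and> {y j, y1 j} \<in> cover j m) \<or>
      (\<exists>j<k. e = {B j, Hv (succ_mod j) (x1 (succ_mod j))}
         \<and> {x (succ_mod j), x1 (succ_mod j)} \<in> cover (succ_mod j) m) \<or>
      (\<exists>j<k. e = {A j, C j} \<and> {y j, y0 j} \<notin> cover j m
         \<and> {x (succ_mod j), x0 (succ_mod j)} \<notin> cover (succ_mod j) m) \<or>
      (\<exists>j<k. e = {B j, C j} \<and> {y j, y1 j} \<notin> cover j m
         \<and> {x (succ_mod j), x1 (succ_mod j)} \<notin> cover (succ_mod j) m) \<or>
      (e = {C 1, Vv 0} \<and> m \<in> {0, 1}) \<or>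
      (\<exists>t. t + 3 < k \<and> e = {Vv t, Vv (Suc t)} \<and> m \<in> path_colours t) \<or>
      (e = {Vv (k - 3), C 0} \<and> m \<in> {0, 1}) \<or>
      (\<exists>i. 2 \<le> i \<and> i < k \<and> e = {C i, Vv (i - 2)} \<and> m \<in> {4, 5}))}"

lemma colour_subset: "colour e \<subseteq> {..<6}"
  unfolding colour_def by auto

lemma colour_internal: "i < k \<Longrightarrow> colour {Hv i u, Hv i w} = colours (cover i) {u, w}"
  unfolding colour_def colours_def by (auto simp: doubleton_eq_iff insert_commute)

lemma colour_attached:
  assumes "j < k"
  shows "colour {A j, Hv j (y0 j)} = cy0 j"
    "colour {A j, Hv (succ_mod j) (x0 (succ_mod j))} = cx0 (succ_mod j)"
    "colour {B j, Hv j (y1 j)} = cy1 j"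
    "colour {B j, Hv (succ_mod j) (x1 (succ_mod j))} = cx1 (succ_mod j)"
  using succ_mod_neq[OF assms] assms unfolding colour_def colours_def by (auto simp: doubleton_eq_iff)

lemma colour_junction:
  assumes "j < k"
  shows "colour {A j, C j} = {..<6} - (cy0 j \<union> cx0 (succ_mod j))"
    "colour {B j, C j} = {..<6} - (cy1 j \<union> cx1 (succ_mod j))"
  using assms unfolding colour_def colours_def by (auto simp: doubleton_eq_iff)

lemma colour_path:
  "colour {C 1, Vv 0} = {0, 1}" "t + 3 < k \<Longrightarrow> colour {Vv t, Vv (Suc t)} = path_colours t"
  "colour {Vv (k - 3), C 0} = {0, 1}" "2 \<le> i \<Longrightarrow> i < k \<Longrightarrow> colour {C i, Vv (i - 2)} = {4, 5}"
  unfolding colour_def path_colours_def by (auto simp: doubleton_eq_iff)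

lemma edges_at_A:
  assumes j: "j < k"
  shows "{e \<in> EG. A j \<in> e} = {{A j, Hv j (y0 j)}, {A j, Hv (succ_mod j) (x0 (succ_mod j))}, {A j, C j}}"
proof
  show "{e \<in> EG. A j \<in> e} \<subseteq> {{A j, Hv j (y0 j)}, {A j, Hv (succ_mod j) (x0 (succ_mod j))}, {A j, C j}}"
  proof (intro subsetI, elim CollectE conjE)
    fix e assume "e \<in> EG" "A j \<in> e"
    then show "e \<in> {{A j, Hv j (y0 j)}, {A j, Hv (succ_mod j) (x0 (succ_mod j))}, {A j, C j}}"
      by (cases rule: EG_cases) auto
  qed
  show "{{A j, Hv j (y0 j)}, {A j, Hv (succ_mod j) (x0 (succ_mod j))}, {A j, C j}} \<subseteq> {e \<in> EG. A j \<in> e}"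
    using EG_memberI[OF j] by auto
qed

lemma edges_at_B:
  assumes j: "j < k"
  shows "{e \<in> EG. B j \<in> e} = {{B j, Hv j (y1 j)}, {B j, Hv (succ_mod j) (x1 (succ_mod j))}, {B j, C j}}"
proof
  show "{e \<in> EG. B j \<in> e} \<subseteq> {{B j, Hv j (y1 j)}, {B j, Hv (succ_mod j) (x1 (succ_mod j))}, {B j, C j}}"
  proof (intro subsetI, elim CollectE conjE)
    fix e assume "e \<in> EG" "B j \<in> e"
    then show "e \<in> {{B j, Hv j (y1 j)}, {B j, Hv (succ_mod j) (x1 (succ_mod j))}, {B j, C j}}"
      by (cases rule: EG_cases) auto
  qed
  show "{{B j, Hv j (y1 j)}, {B j, Hv (succ_mod j) (x1 (succ_mod j))}, {B j, C j}} \<subseteq> {e \<in> EG. B j \<in> e}"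
    using EG_memberI[OF j] by auto
qed

definition third_edge :: "nat \<Rightarrow> 'a mv set" where
  "third_edge j = (if j = 0 then {Vv (k - 3), C 0} else if j = 1 then {C 1, Vv 0} else {C j, Vv (j - 2)})"

lemma edges_at_C:
  assumes j: "j < k"
  shows "{e \<in> EG. C j \<in> e} = {{A j, C j}, {B j, C j}, third_edge j}"
proof
  show "{e \<in> EG. C j \<in> e} \<subseteq> {{A j, C j}, {B j, C j}, third_edge j}"
  proof (intro subsetI, elim CollectE conjE)
    fix e assume "e \<in> EG" "C j \<in> e"
    then show "e \<in> {{A j, C j}, {B j, C j}, third_edge j}"
      by (cases rule: EG_cases) (auto simp: third_edge_def)
  qed
  have "third_edge j \<in> EG"
    unfolding third_edge_def using EG_pathI(1,3) EG_pathI(4)[of j] j by auto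
  then show "{{A j, C j}, {B j, C j}, third_edge j} \<subseteq> {e \<in> EG. C j \<in> e}"
    using EG_memberI(5,6)[OF j] by (auto simp: third_edge_def)
qed

lemma colour_third_edge: "j < k \<Longrightarrow> colour (third_edge j) = junction_colours j"
  unfolding third_edge_def junction_colours_def using colour_path(1,3) colour_path(4)[of j] by auto

definition left_edge :: "nat \<Rightarrow> 'a mv set" where
  "left_edge t = (if t = 0 then {C 1, Vv 0} else {Vv (t - 1), Vv t})"

definition right_edge :: "nat \<Rightarrow> 'a mv set" where
  "right_edge t = (if t + 3 = k then {Vv (k - 3), C 0} else {Vv t, Vv (Suc t)})"

lemma edges_at_Vv:
  assumes t: "t + 2 < k"
  shows "{e \<in> EG. Vv t \<in> e} = {left_edge t, right_edge t, {C (t + 2), Vv t}}"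
proof
  show "{e \<in> EG. Vv t \<in> e} \<subseteq> {left_edge t, right_edge t, {C (t + 2), Vv t}}"
  proof (intro subsetI, elim CollectE conjE)
    fix e assume "e \<in> EG" "Vv t \<in> e"
    then show "e \<in> {left_edge t, right_edge t, {C (t + 2), Vv t}}"
      using t k_ge_4 by (cases rule: EG_cases) (auto simp: left_edge_def right_edge_def)
  qed
  show "{left_edge t, right_edge t, {C (t + 2), Vv t}} \<subseteq> {e \<in> EG. Vv t \<in> e}"
    unfolding left_edge_def right_edge_def
    using EG_pathI(1,3) EG_pathI(2)[of "t - 1"] EG_pathI(2)[of t] EG_pathI(4)[of "t + 2"] t by auto
qed

lemma colour_left_edge:
  assumes "t + 2 < k"
  shows "colour (left_edge t) = (if t = 0 then {0, 1} else path_colours (t - 1))"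
proof (cases "t = 0")
  case True
  then show ?thesis
    unfolding left_edge_def using colour_path(1) by simp
next
  case False
  then have "t - 1 + 3 < k" "Suc (t - 1) = t"
    using assms by simp_all
  then show ?thesis
    unfolding left_edge_def using colour_path(2)[of "t - 1"] False by simp
qed

lemma colour_right_edge:
  assumes "t + 2 < k"
  shows "colour (right_edge t) = (if t + 3 = k then {0, 1} else path_colours t)"
proof (cases "t + 3 = k")
  case True
  then show ?thesis
    unfolding right_edge_def using colour_path(3) by simp
next
  case False
  then have "t + 3 < k"
    using assms by simp
  then show ?thesis
    unfolding right_edge_def using colour_path(2)[of t] False by simp
qed

lemma path_vertex_pair_partition:
  assumes t: "t + 2 < k"
  shows "pair_partition (colour (left_edge t)) (colour (right_edge t)) (colour {C (t + 2), Vv t})"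
proof -
  have "colour (left_edge t) = {0, 1} \<and> colour (right_edge t) = {2, 3}
      \<or> colour (left_edge t) = {2, 3} \<and> colour (right_edge t) = {0, 1}"
  proof -
    consider "t = 0" | "t \<noteq> 0" "t + 3 = k" | "t \<noteq> 0" "t + 3 \<noteq> k"
      by blast
    then show ?thesis
    proof cases
      case 1
      then show ?thesis
        using k_ge_4 unfolding colour_left_edge[OF t] colour_right_edge[OF t] path_colours_def by simp
    next
      case 2
      then have "even (t - 1)"
        using k_even by presburger
      then show ?thesis
        using 2 unfolding colour_left_edge[OF t] colour_right_edge[OF t] path_colours_def by simp
    next
      case 3
      then have "even (t - 1) \<longleftrightarrow> odd t"
        by (cases t) simp_all
      then show ?thesis
        using 3 unfolding colour_left_edge[OF t] colour_right_edge[OF t] path_colours_def by auto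
    qed
  qed
  moreover have "colour {C (t + 2), Vv t} = {4, 5}"
    using colour_path(4)[of "t + 2"] t by simp
  moreover have "pair_partition {0, 1} {2, 3} {4, 5}" "pair_partition {2, 3} {0, 1} {4, 5}"
    unfolding pair_partition_def lessThan_6 by auto
  ultimately show ?thesis
    by auto
qed

definition lift :: "nat \<Rightarrow> 'a \<Rightarrow> 'a set \<Rightarrow> 'a mv set" where
  "lift i u f =
     (if f = {u, y i} then (if u = y0 i then {A i, Hv i u} else {B i, Hv i u})
      else if f = {u, x i} then (if u = x0 i then {A (pred_mod i), Hv i u} else {B (pred_mod i), Hv i u})
      else Hv i ` f)"

lemma lift_edge_at_y:
  assumes i: "i < k" and "{u, y i} \<in> E i" "u \<noteq> x i"
  shows "lift i u {u, y i} \<in> EG \<and> Hv i u \<in> lift i u {u, y i}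
    \<and> colour (lift i u {u, y i}) = colours (cover i) {u, y i}"
proof -
  have "{u, y i} = {y i, u}"
    by blast
  with neighbour_of_y[OF assms] show ?thesis
    using EG_memberI(1,3)[OF i] colour_attached(1,3)[OF i] piece(12)[OF i]
    unfolding lift_def by auto
qed

lemma lift_edge_at_x:
  assumes i: "i < k" and "{u, x i} \<in> E i" "u \<noteq> y i"
  shows "lift i u {u, x i} \<in> EG \<and> Hv i u \<in> lift i u {u, x i}
    \<and> colour (lift i u {u, x i}) = colours (cover i) {u, x i}"
proof -
  have j: "pred_mod i < k" "succ_mod (pred_mod i) = i"
    using pred_mod_lt[OF i] succ_pred_mod[OF i] by simp_all
  have "{u, x i} = {x i, u}" "{u, x i} \<noteq> {u, y i}"
    using piece_ends(1)[OF i] by (auto simp: doubleton_eq_iff)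
  with neighbour_of_x[OF assms] show ?thesis
    using EG_memberI(2,4)[OF j(1)] colour_attached(2,4)[OF j(1)] piece(9)[OF i]
    unfolding lift_def j(2) by auto
qed

lemma lift_edge:
  assumes i: "i < k" and u: "u \<noteq> x i" "u \<noteq> y i" and f: "f \<in> E i" "u \<in> f"
  shows "lift i u f \<in> EG \<and> Hv i u \<in> lift i u f \<and> colour (lift i u f) = colours (cover i) f"
proof -
  obtain w where w: "f = {u, w}" "w \<noteq> u"
    using graph_edge_other_end[OF piece(2)[OF i] f] .
  consider "w = y i" | "w = x i" | "w \<noteq> x i" "w \<noteq> y i"
    by blast
  then show ?thesis
  proof cases
    case 1
    then have "f = {u, y i}"
      using w by simp
    then show ?thesis
      using lift_edge_at_y[OF i _ u(1)] f(1) by simp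
  next
    case 2
    then have "f = {u, x i}"
      using w by simp
    then show ?thesis
      using lift_edge_at_x[OF i _ u(2)] f(1) by simp
  next
    case 3
    then have "lift i u f = {Hv i u, Hv i w}"
      unfolding lift_def using w u by (auto simp: doubleton_eq_iff)
    moreover have "{u, w} \<in> E i" "x i \<notin> {u, w}" "y i \<notin> {u, w}"
      using w f 3 u by auto
    ultimately show ?thesis
      using EG_internalI[OF i] colour_internal[OF i] w(1) by simp
  qed
qed

lemma lift_onto:
  assumes i: "i < k" and u: "u \<noteq> x i" "u \<noteq> y i" and e: "e \<in> EG" "Hv i u \<in> e"
  shows "\<exists>f. f \<in> E i \<and> u \<in> f \<and> e = lift i u f"
  using e(1)
proof (cases rule: EG_cases)
  case (internal i' u' w')
  have "i' = i" "u \<in> {u', w'}"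
    using e(2) internal(2) by auto
  then have "{u', w'} \<noteq> {u, y i}" "{u', w'} \<noteq> {u, x i}"
    using internal(4,5) by auto
  then have "e = lift i u {u', w'}"
    unfolding lift_def using internal(2) \<open>i' = i\<close> by simp
  then show ?thesis
    using internal(3) \<open>i' = i\<close> \<open>u \<in> {u', w'}\<close> by blast
next
  case (Ay j)
  then have "e = lift i u {u, y i}" "{u, y i} \<in> E i"
    using e(2) piece(7)[OF i] by (auto simp: lift_def insert_commute)
  then show ?thesis
    by blast
next
  case (By j)
  then have "e = lift i u {u, y i}" "{u, y i} \<in> E i"
    using e(2) piece(8,12)[OF i] by (auto simp: lift_def insert_commute)
  then show ?thesis
    by blast
next
  case (Ax j)
  then have "j = pred_mod i" "u = x0 i"
    using e(2) pred_succ_mod[OF Ax(1)] by auto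
  then have "e = lift i u {u, x i}" "{u, x i} \<in> E i"
    using Ax piece(5)[OF i] piece_ends(1)[OF i] succ_pred_mod[OF i]
    by (auto simp: lift_def insert_commute doubleton_eq_iff)
  then show ?thesis
    by blast
next
  case (Bx j)
  then have "j = pred_mod i" "u = x1 i"
    using e(2) pred_succ_mod[OF Bx(1)] by auto
  then have "e = lift i u {u, x i}" "{u, x i} \<in> E i"
    using Bx piece(6,9)[OF i] piece_ends(1)[OF i] succ_pred_mod[OF i]
    by (auto simp: lift_def insert_commute doubleton_eq_iff)
  then show ?thesis
    by blast
qed (use e(2) in simp_all)

lemma unique_colour_at_Hv:
  assumes "i < k" "u \<in> V i" "u \<noteq> x i" "u \<noteq> y i" "m < 6"
  shows "\<exists>!e. e \<in> EG \<and> Hv i u \<in> e \<and> m \<in> colour e"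
  using fulkerson_family_unique_colour[OF cover_fulkerson[OF assms(1)] assms(2,5)]
    lift_edge[OF assms(1,3,4)] lift_onto[OF assms(1,3,4)]
  by (rule unique_colour_transfer)

lemma unique_colour_at_construction_vertex:
  assumes "v \<in> VG" "m < 6"
  shows "\<exists>!e. e \<in> EG \<and> v \<in> e \<and> m \<in> colour e"
  using assms(1) unfolding VG_iff
proof (elim disjE exE conjE)
  fix i u assume "v = Hv i u" "i < k" "u \<in> V i" "u \<noteq> x i" "u \<noteq> y i"
  then show ?thesis
    using unique_colour_at_Hv assms(2) by simp
next
  fix j assume j: "j < k" "v = A j"
  have "pair_partition (colour {A j, Hv j (y0 j)}) (colour {A j, Hv (succ_mod j) (x0 (succ_mod j))})
      (colour {A j, C j})"
    using junction_partitions(1)[OF j(1)] colour_attached[OF j(1)] colour_junction[OF j(1)] by simp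
  then show ?thesis
    using unique_colour_at_vertex[OF edges_at_A[OF j(1)] _ assms(2)] j(2) by simp
next
  fix j assume j: "j < k" "v = B j"
  have "pair_partition (colour {B j, Hv j (y1 j)}) (colour {B j, Hv (succ_mod j) (x1 (succ_mod j))})
      (colour {B j, C j})"
    using junction_partitions(2)[OF j(1)] colour_attached[OF j(1)] colour_junction[OF j(1)] by simp
  then show ?thesis
    using unique_colour_at_vertex[OF edges_at_B[OF j(1)] _ assms(2)] j(2) by simp
next
  fix j assume j: "j < k" "v = C j"
  have "pair_partition (colour {A j, C j}) (colour {B j, C j}) (colour (third_edge j))"
    using junction_partitions(3)[OF j(1)] colour_junction[OF j(1)] colour_third_edge[OF j(1)] by simp
  then show ?thesis
    using unique_colour_at_vertex[OF edges_at_C[OF j(1)] _ assms(2)] j(2) by simp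
next
  fix t assume "v = Vv t" "t + 2 < k"
  then show ?thesis
    using unique_colour_at_vertex[OF edges_at_Vv path_vertex_pair_partition assms(2)] by simp
qed

lemma card_colour:
  assumes "e \<in> EG"
  shows "card (colour e) = 2"
  using assms
proof (cases rule: EG_cases)
  case (internal i u w)
  then show ?thesis
    using colour_internal cover_fulkerson unfolding fulkerson_family_def by simp
next
  case (Ay j)
  then show ?thesis
    using colour_attached(1) cover_fulkerson piece(7) unfolding fulkerson_family_def by simp
next
  case (Ax j)
  then show ?thesis
    using colour_attached(2) cover_fulkerson[OF succ_mod_lt] piece(5)[OF succ_mod_lt]
    unfolding fulkerson_family_def by simp
next
  case (By j)
  then show ?thesis
    using colour_attached(3) cover_fulkerson piece(8) unfolding fulkerson_family_def by simp
next
  case (Bx j)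
  then show ?thesis
    using colour_attached(4) cover_fulkerson[OF succ_mod_lt] piece(6)[OF succ_mod_lt]
    unfolding fulkerson_family_def by simp
next
  case (AC j)
  then show ?thesis
    using colour_junction(1) junction_partitions(3) unfolding pair_partition_def by simp
next
  case (BC j)
  then show ?thesis
    using colour_junction(2) junction_partitions(3) unfolding pair_partition_def by simp
next
  case C1
  then show ?thesis
    unfolding C1 colour_path(1) by simp
next
  case (path t)
  then show ?thesis
    using colour_path(2) unfolding path_colours_def by simp
qed (simp_all add: colour_path)

lemma construction_has_fulkerson_cover: "has_fulkerson_cover VG EG"
  using colour_subset card_colour unique_colour_at_construction_vertex
  by (intro has_fulkerson_cover_if_colouring[where col = colour]) blast+

end

theorem theorem3p1:
  fixes k :: nat and \<Gamma> :: "'a mv set \<times> 'a mv set set"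
  assumes "k \<ge> 4" and "even k" and "\<Gamma> \<in> M_family k"
  shows "has_fulkerson_cover (fst \<Gamma>) (snd \<Gamma>)"
proof -
  obtain V E x y x0 x1 y0 y1 where \<Gamma>: "\<Gamma> = (constr_vertices k V x y, constr_edges k E x y x0 x1 y0 y1)"
    and pieces: "\<forall>i<k. admissible_piece (V i) (E i) (x i) (y i) (x0 i) (x1 i) (y0 i) (y1 i)"
    using assms(3) unfolding M_family_def by blast
  interpret M_construction k V E x y x0 x1 y0 y1
    using assms(1,2) pieces by unfold_locales auto
  show ?thesis
    using construction_has_fulkerson_cover \<Gamma> by simp
qed

end
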